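(* Let $P\in\mathbb{R}^{n\times n}$ be symmetric with eigenvalues $\lambda_1\ge\dots\ge\lambda_n$ and orthonormal eigenvectors $u_1,\dots,u_n$ ($Pu_s=\lambda_su_s$). Let $H\in\mathbb{R}^{n\times n}$ be symmetric, $A=P+H$, with eigenvalues $\tilde\lambda_1\ge\dots\ge\tilde\lambda_n$ and orthonormal eigenvectors $\tilde u_1,\dots,\tilde u_n$ ($A\tilde u_s=\tilde\lambda_s\tilde u_s$). Fix $t\in[n]$ such that $\lambda_t$ has multiplicity one, let $\Delta_t=\min\{|\lambda_t-\lambda_s|: s\neq t\}$, and assume $\|H\|<|\lambda_t|/2$. For $u\in\mathbb{R}^n$ and $\lambda\neq0$ define the vector $\xi(u;H,\lambda)\in\mathbb{R}^n$ by $\xi_j(u;H,\lambda)=\sum_{p\ge1}(2/|\lambda|)^p|(H^pu)_j|$. Then for all $j\in[n]$, $$\min_{\zeta\in\{-1,+1\}}|(\tilde u_t-\zeta u_t)_j|\le\left(\frac{4\|H\|^2}{\Delta_t^2}+\frac{2\|H\|}{|\lambda_t|}\right)|u_{t,j}|+2\xi_j(u_t;H,\lambda_t)+\frac{4\sqrt2\|H\|}{\Delta_t}\sum_{s\ne t}\left|\frac{\lambda_s}{\lambda_t}\right|\big(|u_{s,j}|+\xi_j(u_s;H,\lambda_t)\big).$$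
   Context: $\|\cdot\|$ denotes the spectral norm of a matrix. The series defining $\xi_j$ may take the value $+\infty$, in which case the bound is trivial. *)

theory Defs
  imports "HOL-Analysis.Analysis"
begin

definition spec_norm :: "real^'n^'n \<Rightarrow> real" where
  "spec_norm H = onorm (\<lambda>x. H *v x)"

definition xi :: "real^'n^'n \<Rightarrow> real \<Rightarrow> real^'n \<Rightarrow> 'n \<Rightarrow> ennreal" where
  "xi H lam u j = (\<Sum>p. ennreal ((2 / \<bar>lam\<bar>) ^ Suc p * \<bar>(((\<lambda>x. H *v x) ^^ Suc p) u) $ j\<bar>))"

end

theory Submission
  imports Defs
begin

text \<open>Let \<open>w\<close> be the perturbed eigenvector, \<open>\<mu>\<close> its eigenvalue and \<open>c s = <w, u s>\<close>.
  By Weyl, \<open>|\<mu> - \<lambda> t| \<le> \<parallel>H\<parallel> < |\<lambda> t|/2\<close>. Taking the inner product of \<open>(P + H) w = \<mu> w\<close>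
  with \<open>u s\<close> gives \<open>(\<mu> - \<lambda> s) c s = <u s, H w>\<close>, so the coefficients off \<open>t\<close> are
  \<open>O(\<parallel>H\<parallel>/\<Delta>)\<close> individually and in square sum, and \<open>|c t|\<close> is within \<open>4\<parallel>H\<parallel>\<^sup>2/\<Delta>\<^sup>2\<close> of 1.
  Entrywise control comes from the fixed-point form \<open>w = \<mu>\<^sup>-\<^sup>1 P w + \<mu>\<^sup>-\<^sup>1 H w\<close>: iterating it
  \<open>N\<close> times writes \<open>w\<close> as \<open>\<Sum>s. c s (\<lambda> s/\<mu>) (u s + \<Sum>p=1..N. \<mu>\<^sup>-\<^sup>p H\<^sup>p u s)\<close> plus a remainder
  of norm at most \<open>(\<parallel>H\<parallel>/|\<mu>|)\<^sup>N\<^sup>+\<^sup>1\<close>, and \<open>|\<mu>|\<^sup>-\<^sup>1 \<le> 2/|\<lambda> t|\<close> bounds the inner sums by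
  partial sums of \<open>\<xi>\<close>. The summand \<open>s = t\<close> gives the first two terms of the bound (with
  \<open>\<zeta>\<close> the sign of \<open>c t\<close>), the others the last one; letting \<open>N \<rightarrow> \<infinity>\<close> removes the remainder.\<close>

section \<open>Orthonormal eigenframes and Weyl's inequality\<close>

definition orthonormal_frame :: "(nat \<Rightarrow> real^'n) \<Rightarrow> bool" where
  "orthonormal_frame v \<longleftrightarrow>
     (\<forall>s<CARD('n). \<forall>r<CARD('n). v s \<bullet> v r = (if s = r then 1 else 0))"

lemma orthonormal_frameD:
  "orthonormal_frame v \<Longrightarrow> s < CARD('n) \<Longrightarrow> r < CARD('n)
    \<Longrightarrow> v s \<bullet> v r = (if s = r then 1 else 0)"
  for v :: "nat \<Rightarrow> real^'n"
  unfolding orthonormal_frame_def by blast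

lemma norm_orthonormal_frame:
  "orthonormal_frame v \<Longrightarrow> s < CARD('n) \<Longrightarrow> norm (v s) = 1"
  for v :: "nat \<Rightarrow> real^'n"
  by (simp add: norm_eq_1 orthonormal_frameD)

lemma orthonormal_frame_expansion:
  fixes v :: "nat \<Rightarrow> real^'n"
  assumes frame: "orthonormal_frame v"
  shows "x = (\<Sum>s<CARD('n). (x \<bullet> v s) *\<^sub>R v s)"
proof -
  let ?B = "v ` {..<CARD('n)}"
  note orth = orthonormal_frameD[OF frame]
  have inj: "inj_on v {..<CARD('n)}"
    by (rule inj_onI) (metis lessThan_iff orth zero_neq_one)
  have pairwise: "pairwise orthogonal ?B"
    unfolding pairwise_def orthogonal_def using orth by auto
  have "independent ?B"
    by (rule pairwise_orthogonal_independent[OF pairwise]) (use orth in fastforce)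
  moreover have "card ?B = DIM(real^'n)"
    using inj by (simp add: card_image)
  ultimately have "x \<in> span ?B"
    using card_ge_dim_independent[of ?B UNIV] by auto
  then have "x = (\<Sum>b\<in>?B. (x \<bullet> b) *\<^sub>R b)"
    by (intro orthonormal_basis_expand[symmetric] pairwise)
       (auto simp: norm_orthonormal_frame[OF frame])
  also have "\<dots> = (\<Sum>s<CARD('n). (x \<bullet> v s) *\<^sub>R v s)"
    using inj by (simp add: sum.reindex)
  finally show ?thesis .
qed

lemma orthonormal_frame_inner:
  fixes v :: "nat \<Rightarrow> real^'n"
  assumes "orthonormal_frame v"
  shows "x \<bullet> y = (\<Sum>s<CARD('n). (x \<bullet> v s) * (y \<bullet> v s))"
proof -
  have "x \<bullet> y = (\<Sum>s<CARD('n). (x \<bullet> v s) *\<^sub>R v s) \<bullet> y"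
    using orthonormal_frame_expansion[OF assms, of x] by (rule arg_cong)
  also have "\<dots> = (\<Sum>s<CARD('n). (x \<bullet> v s) * (y \<bullet> v s))"
    unfolding inner_sum_left inner_scaleR_left by (simp add: inner_commute)
  finally show ?thesis .
qed

lemma orthonormal_frame_inner_self:
  fixes v :: "nat \<Rightarrow> real^'n"
  assumes "orthonormal_frame v"
  shows "x \<bullet> x = (\<Sum>s<CARD('n). (x \<bullet> v s)\<^sup>2)"
  using orthonormal_frame_inner[OF assms, of x x] by (simp add: power2_eq_square)

lemma quadratic_form_eigenframe:
  fixes v :: "nat \<Rightarrow> real^'n" and M :: "real^'n^'n"
  assumes "orthonormal_frame v"
    and eig: "\<And>s. s < CARD('n) \<Longrightarrow> M *v v s = l s *\<^sub>R v s"
  shows "x \<bullet> (M *v x) = (\<Sum>s<CARD('n). l s * (x \<bullet> v s)\<^sup>2)"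
proof -
  have "M *v x = M *v (\<Sum>s<CARD('n). (x \<bullet> v s) *\<^sub>R v s)"
    using orthonormal_frame_expansion[OF assms(1), of x] by simp
  also have "\<dots> = (\<Sum>s<CARD('n). (x \<bullet> v s) *\<^sub>R (l s *\<^sub>R v s))"
    by (simp add: linear_sum[OF matrix_vector_mul_linear] matrix_vector_mult_scaleR eig)
  finally show ?thesis
    by (simp add: inner_sum_right power2_eq_square mult_ac)
qed

lemma quadratic_form_eigenframe_ge:
  fixes v :: "nat \<Rightarrow> real^'n" and M :: "real^'n^'n"
  assumes frame: "orthonormal_frame v"
    and eig: "\<And>s. s < CARD('n) \<Longrightarrow> M *v v s = l s *\<^sub>R v s"
    and bound: "\<And>s. s < CARD('n) \<Longrightarrow> x \<bullet> v s \<noteq> 0 \<Longrightarrow> c \<le> l s"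
  shows "c * (x \<bullet> x) \<le> x \<bullet> (M *v x)"
proof -
  have "c * (x \<bullet> x) = (\<Sum>s<CARD('n). c * (x \<bullet> v s)\<^sup>2)"
    by (simp add: orthonormal_frame_inner_self[OF frame] sum_distrib_left)
  also have "\<dots> \<le> (\<Sum>s<CARD('n). l s * (x \<bullet> v s)\<^sup>2)"
  proof (rule sum_mono)
    fix s assume "s \<in> {..<CARD('n)}"
    then show "c * (x \<bullet> v s)\<^sup>2 \<le> l s * (x \<bullet> v s)\<^sup>2"
      using bound[of s] by (cases "x \<bullet> v s = 0") (auto intro: mult_right_mono)
  qed
  finally show ?thesis
    by (simp add: quadratic_form_eigenframe[OF frame eig])
qed

lemma quadratic_form_eigenframe_le:
  fixes v :: "nat \<Rightarrow> real^'n" and M :: "real^'n^'n"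
  assumes frame: "orthonormal_frame v"
    and eig: "\<And>s. s < CARD('n) \<Longrightarrow> M *v v s = l s *\<^sub>R v s"
    and bound: "\<And>s. s < CARD('n) \<Longrightarrow> x \<bullet> v s \<noteq> 0 \<Longrightarrow> l s \<le> c"
  shows "x \<bullet> (M *v x) \<le> c * (x \<bullet> x)"
proof -
  have "(\<Sum>s<CARD('n). l s * (x \<bullet> v s)\<^sup>2) \<le> (\<Sum>s<CARD('n). c * (x \<bullet> v s)\<^sup>2)"
  proof (rule sum_mono)
    fix s assume "s \<in> {..<CARD('n)}"
    then show "l s * (x \<bullet> v s)\<^sup>2 \<le> c * (x \<bullet> v s)\<^sup>2"
      using bound[of s] by (cases "x \<bullet> v s = 0") (auto intro: mult_right_mono)
  qed
  also have "\<dots> = c * (x \<bullet> x)"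
    by (simp add: orthonormal_frame_inner_self[OF frame] sum_distrib_left)
  finally show ?thesis
    by (simp add: quadratic_form_eigenframe[OF frame eig])
qed

lemma spec_norm_nonneg: "0 \<le> spec_norm H"
  unfolding spec_norm_def by (rule onorm_pos_le) simp

lemma norm_mult_le_spec_norm: "norm (H *v x) \<le> spec_norm H * norm x"
  unfolding spec_norm_def by (rule onorm) simp

lemma spec_norm_minus_commute: "spec_norm (A - B) = spec_norm (B - A)"
proof -
  have "(\<lambda>x. (A - B) *v x) = (\<lambda>x. - ((B - A) *v x))"
    by (simp add: matrix_vector_mult_diff_rdistrib)
  then show ?thesis
    unfolding spec_norm_def by (simp add: onorm_neg)
qed

lemma abs_quadratic_form_le_spec_norm: "\<bar>x \<bullet> (H *v x)\<bar> \<le> spec_norm H * (x \<bullet> x)"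
proof -
  have "\<bar>x \<bullet> (H *v x)\<bar> \<le> norm x * norm (H *v x)"
    by (rule Cauchy_Schwarz_ineq2)
  also have "\<dots> \<le> norm x * (spec_norm H * norm x)"
    by (rule mult_left_mono[OF norm_mult_le_spec_norm]) simp
  finally show ?thesis
    by (simp add: dot_square_norm power2_eq_square mult_ac)
qed

lemma exists_nonzero_orthogonal:
  fixes S :: "(real^'n) set"
  assumes "finite S" "card S < CARD('n)"
  obtains x where "x \<noteq> 0" "\<And>y. y \<in> S \<Longrightarrow> x \<bullet> y = 0"
proof -
  have "dim S \<le> card S"
    by (rule dim_le_card) (use assms in \<open>auto intro: span_base\<close>)
  then have "dim S < DIM(real^'n)"
    using assms by simp
  then obtain x where "x \<noteq> 0" "\<And>y. y \<in> span S \<Longrightarrow> orthogonal x y"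
    using orthogonal_to_subspace_exists by blast
  then show ?thesis
    using that by (auto simp: orthogonal_def intro: span_base)
qed

text \<open>Courant--Fischer in its simplest form: by counting dimensions some nonzero \<open>x\<close> is
  orthogonal to the eigenvectors of \<open>M\<close> with index above \<open>t\<close> and to those of \<open>M'\<close> with index
  below \<open>t\<close>; comparing its two Rayleigh quotients gives the bound.\<close>

lemma eigenvalue_ge_perturbed:
  fixes M M' :: "real^'n^'n"
  assumes l_sorted: "\<And>s r. s \<le> r \<Longrightarrow> r < CARD('n) \<Longrightarrow> l r \<le> l s"
    and v: "orthonormal_frame v" and v_eig: "\<And>s. s < CARD('n) \<Longrightarrow> M *v v s = l s *\<^sub>R v s"
    and l'_sorted: "\<And>s r. s \<le> r \<Longrightarrow> r < CARD('n) \<Longrightarrow> l' r \<le> l' s"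
    and v': "orthonormal_frame v'" and v'_eig: "\<And>s. s < CARD('n) \<Longrightarrow> M' *v v' s = l' s *\<^sub>R v' s"
    and t: "t < CARD('n)"
  shows "l t - spec_norm (M' - M) \<le> l' t"
proof -
  let ?S = "v ` {t<..<CARD('n)} \<union> v' ` {..<t}"
  have "card ?S \<le> card {t<..<CARD('n)} + card {..<t}"
    by (intro card_Un_le[THEN order_trans] add_mono card_image_le) auto
  also have "\<dots> < CARD('n)"
    using t by simp
  finally obtain x where "x \<noteq> 0" and x_orth: "\<And>y. y \<in> ?S \<Longrightarrow> x \<bullet> y = 0"
    using exists_nonzero_orthogonal[of ?S] by blast
  have "l t * (x \<bullet> x) \<le> x \<bullet> (M *v x)"
  proof (rule quadratic_form_eigenframe_ge[OF v v_eig])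
    fix s assume "s < CARD('n)" "x \<bullet> v s \<noteq> 0"
    then show "l t \<le> l s"
      using x_orth[of "v s"] l_sorted[of s t] t by (cases "s \<le> t") auto
  qed
  moreover have "x \<bullet> (M' *v x) \<le> l' t * (x \<bullet> x)"
  proof (rule quadratic_form_eigenframe_le[OF v' v'_eig])
    fix s assume "s < CARD('n)" "x \<bullet> v' s \<noteq> 0"
    then show "l' s \<le> l' t"
      using x_orth[of "v' s"] l'_sorted[of t s] by (cases "t \<le> s") auto
  qed
  moreover have "x \<bullet> (M' *v x) - x \<bullet> (M *v x) \<ge> - spec_norm (M' - M) * (x \<bullet> x)"
    using abs_quadratic_form_le_spec_norm[of x "M' - M"]
    by (simp add: matrix_vector_mult_diff_rdistrib inner_diff_right)
  ultimately have "(l t - spec_norm (M' - M)) * (x \<bullet> x) \<le> l' t * (x \<bullet> x)"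
    by (simp add: algebra_simps)
  moreover have "0 < x \<bullet> x"
    using \<open>x \<noteq> 0\<close> by simp
  ultimately show ?thesis
    by simp
qed

lemma weyl_eigenvalue_perturbation:
  fixes M M' :: "real^'n^'n"
  assumes "\<And>s r. s \<le> r \<Longrightarrow> r < CARD('n) \<Longrightarrow> l r \<le> l s"
    and "orthonormal_frame v" and "\<And>s. s < CARD('n) \<Longrightarrow> M *v v s = l s *\<^sub>R v s"
    and "\<And>s r. s \<le> r \<Longrightarrow> r < CARD('n) \<Longrightarrow> l' r \<le> l' s"
    and "orthonormal_frame v'" and "\<And>s. s < CARD('n) \<Longrightarrow> M' *v v' s = l' s *\<^sub>R v' s"
    and "t < CARD('n)"
  shows "\<bar>l' t - l t\<bar> \<le> spec_norm (M' - M)"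
  using eigenvalue_ge_perturbed[of l v M l' v' M' t] eigenvalue_ge_perturbed[of l' v' M' l v M t]
    assms spec_norm_minus_commute[of M M']
  by (simp add: abs_le_iff)

lemma eigencoefficient_identity:
  fixes P H :: "real^'n^'n"
  assumes "transpose P = P" and "P *v v = l *\<^sub>R v" and "(P + H) *v w = \<mu> *\<^sub>R w"
  shows "(\<mu> - l) * (w \<bullet> v) = v \<bullet> (H *v w)"
proof -
  have "v \<bullet> (P *v w) = (P *v v) \<bullet> w"
    using assms(1) by (metis dot_lmul_matrix vector_transpose_matrix)
  then have "v \<bullet> (P *v w) = l * (w \<bullet> v)"
    using assms(2) by (simp add: inner_commute)
  moreover have "v \<bullet> ((P + H) *v w) = \<mu> * (w \<bullet> v)"
    using assms(3) by (simp add: inner_commute)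
  ultimately show ?thesis
    by (simp add: matrix_vector_mult_add_rdistrib inner_add_right algebra_simps)
qed

section \<open>Neumann expansion of a fixed point\<close>

lemma linear_matrix_funpow: "linear ((\<lambda>x. H *v x) ^^ k)"
  for H :: "real^'n^'n"
proof (induction k)
  case (Suc k)
  then show ?case
    using linear_compose[OF Suc matrix_vector_mul_linear] by (simp add: o_def)
qed (simp add: linear_id[unfolded id_def])

lemma norm_matrix_funpow_le: "norm (((\<lambda>x. H *v x) ^^ k) x) \<le> spec_norm H ^ k * norm x"
  for H :: "real^'n^'n"
proof (induction k)
  case (Suc k)
  have "norm (((\<lambda>x. H *v x) ^^ Suc k) x) \<le> spec_norm H * norm (((\<lambda>x. H *v x) ^^ k) x)"
    using norm_mult_le_spec_norm by simp
  also have "\<dots> \<le> spec_norm H * (spec_norm H ^ k * norm x)"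
    by (rule mult_left_mono[OF Suc spec_norm_nonneg])
  finally show ?case
    by (simp add: mult_ac)
qed simp

definition neumann_tail :: "real^'n^'n \<Rightarrow> real \<Rightarrow> nat \<Rightarrow> real^'n \<Rightarrow> real^'n" where
  "neumann_tail H \<mu> N v = (\<Sum>p<N. (1 / \<mu>) ^ Suc p *\<^sub>R ((\<lambda>x. H *v x) ^^ Suc p) v)"

lemma linear_neumann_tail: "linear (neumann_tail H \<mu> N)"
  for H :: "real^'n^'n"
  unfolding neumann_tail_def
  by (intro linear_compose_sum ballI linear_compose_scale_right linear_matrix_funpow)

lemma neumann_expansion:
  fixes H :: "real^'n^'n"
  assumes fixed: "w = y + (1 / \<mu>) *\<^sub>R (H *v w)"
  shows "w = y + neumann_tail H \<mu> N y + (1 / \<mu>) ^ Suc N *\<^sub>R ((\<lambda>x. H *v x) ^^ Suc N) w"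
proof (induction N)
  case 0
  then show ?case
    using fixed by (simp add: neumann_tail_def)
next
  case (Suc N)
  let ?G = "\<lambda>k. (\<lambda>x. H *v x) ^^ k"
  have "?G (Suc N) w = ?G (Suc N) y + (1 / \<mu>) *\<^sub>R ?G (Suc N) (H *v w)"
    using fixed linear_add[OF linear_matrix_funpow] linear_scale[OF linear_matrix_funpow] by metis
  also have "?G (Suc N) (H *v w) = ?G (Suc (Suc N)) w"
    by (simp only: funpow_Suc_right o_def)
  finally have step: "(1 / \<mu>) ^ Suc N *\<^sub>R ?G (Suc N) w
      = (1 / \<mu>) ^ Suc N *\<^sub>R ?G (Suc N) y + (1 / \<mu>) ^ Suc (Suc N) *\<^sub>R ?G (Suc (Suc N)) w"
    by (simp only: scaleR_add_right scaleR_scaleR power_Suc2)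
  have "w = y + neumann_tail H \<mu> N y + (1 / \<mu>) ^ Suc N *\<^sub>R ?G (Suc N) w"
    by (rule Suc.IH)
  also note step
  also have "y + neumann_tail H \<mu> N y
      + ((1 / \<mu>) ^ Suc N *\<^sub>R ?G (Suc N) y + (1 / \<mu>) ^ Suc (Suc N) *\<^sub>R ?G (Suc (Suc N)) w)
    = y + neumann_tail H \<mu> (Suc N) y + (1 / \<mu>) ^ Suc (Suc N) *\<^sub>R ?G (Suc (Suc N)) w"
    by (simp only: neumann_tail_def sum.lessThan_Suc add.assoc)
  finally show ?case .
qed

lemma norm_neumann_remainder_le:
  "norm ((1 / \<mu>) ^ k *\<^sub>R ((\<lambda>x. H *v x) ^^ k) w) \<le> (spec_norm H / \<bar>\<mu>\<bar>) ^ k * norm w"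
  for H :: "real^'n^'n"
proof -
  have "norm ((1 / \<mu>) ^ k *\<^sub>R ((\<lambda>x. H *v x) ^^ k) w)
      = (1 / \<bar>\<mu>\<bar>) ^ k * norm (((\<lambda>x. H *v x) ^^ k) w)"
    by (simp add: power_abs)
  also have "\<dots> \<le> (1 / \<bar>\<mu>\<bar>) ^ k * (spec_norm H ^ k * norm w)"
    by (intro mult_left_mono norm_matrix_funpow_le) simp
  finally show ?thesis
    by (simp add: power_divide)
qed

definition xi_partial :: "real^'n^'n \<Rightarrow> real \<Rightarrow> nat \<Rightarrow> real^'n \<Rightarrow> 'n \<Rightarrow> real" where
  "xi_partial H lam N v j = (\<Sum>p<N. (2 / \<bar>lam\<bar>) ^ Suc p * \<bar>(((\<lambda>x. H *v x) ^^ Suc p) v) $ j\<bar>)"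

lemma xi_partial_nonneg: "0 \<le> xi_partial H lam N v j"
  unfolding xi_partial_def by (intro sum_nonneg) simp

lemma xi_partial_le_xi: "ennreal (xi_partial H lam N v j) \<le> xi H lam v j"
proof -
  have "ennreal (xi_partial H lam N v j)
      = (\<Sum>p<N. ennreal ((2 / \<bar>lam\<bar>) ^ Suc p * \<bar>(((\<lambda>x. H *v x) ^^ Suc p) v) $ j\<bar>))"
    unfolding xi_partial_def by (rule sum_ennreal[symmetric]) simp
  also have "\<dots> \<le> xi H lam v j"
    unfolding xi_def by (rule sum_le_suminf) auto
  finally show ?thesis .
qed

lemma abs_neumann_tail_component_le:
  assumes "\<bar>1 / \<mu>\<bar> \<le> 2 / \<bar>lam\<bar>"
  shows "\<bar>neumann_tail H \<mu> N v $ j\<bar> \<le> xi_partial H lam N v j"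
  unfolding neumann_tail_def xi_partial_def
proof (rule order_trans[OF _ sum_mono])
  show "\<bar>(\<Sum>p<N. (1 / \<mu>) ^ Suc p *\<^sub>R ((\<lambda>x. H *v x) ^^ Suc p) v) $ j\<bar>
      \<le> (\<Sum>p<N. \<bar>1 / \<mu>\<bar> ^ Suc p * \<bar>(((\<lambda>x. H *v x) ^^ Suc p) v) $ j\<bar>)"
    by (simp add: sum_component abs_mult power_abs order_trans[OF sum_abs])
  show "\<bar>1 / \<mu>\<bar> ^ Suc p * \<bar>(((\<lambda>x. H *v x) ^^ Suc p) v) $ j\<bar>
      \<le> (2 / \<bar>lam\<bar>) ^ Suc p * \<bar>(((\<lambda>x. H *v x) ^^ Suc p) v) $ j\<bar>" for p
    using assms by (intro mult_right_mono power_mono) auto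
qed

section \<open>Perturbation of a simple eigenvector\<close>

text \<open>The dimension is an explicit parameter \<open>n = CARD('n)\<close> only so that \<open>others\<close> and \<open>gap\<close> can be
  locale abbreviations, which may not mention the type \<open>'n\<close> on their own.\<close>

locale simple_eigen_perturbation =
  fixes P H :: "real^'n^'n"
    and lam lamt :: "nat \<Rightarrow> real"
    and u ut :: "nat \<Rightarrow> real^'n"
    and t n :: nat
  assumes n_card: "n = CARD('n)"
    and P_sym: "transpose P = P"
    and lam_sorted: "\<And>s r. s \<le> r \<Longrightarrow> r < CARD('n) \<Longrightarrow> lam r \<le> lam s"
    and u_frame: "orthonormal_frame u"
    and u_eig: "\<And>s. s < CARD('n) \<Longrightarrow> P *v u s = lam s *\<^sub>R u s"
    and lamt_sorted: "\<And>s r. s \<le> r \<Longrightarrow> r < CARD('n) \<Longrightarrow> lamt r \<le> lamt s"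
    and ut_frame: "orthonormal_frame ut"
    and ut_eig: "\<And>s. s < CARD('n) \<Longrightarrow> (P + H) *v ut s = lamt s *\<^sub>R ut s"
    and t_range: "t < CARD('n)"
    and simple: "\<And>s. s < CARD('n) \<Longrightarrow> s \<noteq> t \<Longrightarrow> lam s \<noteq> lam t"
    and H_small: "spec_norm H < \<bar>lam t\<bar> / 2"
begin

abbreviation others :: "nat set" where
  "others \<equiv> {..<n} - {t}"

abbreviation gap :: real where
  "gap \<equiv> Min {\<bar>lam t - lam s\<bar> | s. s < n \<and> s \<noteq> t}"

abbreviation coef :: "nat \<Rightarrow> real" where
  "coef s \<equiv> ut t \<bullet> u s"

lemma lamt_close: "\<bar>lamt t - lam t\<bar> \<le> spec_norm H"
  using weyl_eigenvalue_perturbation[OF lam_sorted u_frame u_eig lamt_sorted ut_frame ut_eig t_range]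
  by simp

lemma lamt_large: "\<bar>lam t\<bar> / 2 < \<bar>lamt t\<bar>"
  using lamt_close H_small by linarith

lemma lam_t_pos: "0 < \<bar>lam t\<bar>"
  using H_small spec_norm_nonneg[of H] by linarith

lemma abs_inverse_lamt_le: "\<bar>1 / lamt t\<bar> \<le> 2 / \<bar>lam t\<bar>"
  using lamt_large lam_t_pos by (simp add: field_simps abs_divide)

lemma abs_lam_div_lamt_le: "\<bar>lam t / lamt t\<bar> \<le> 2"
  using lamt_large by (simp add: abs_divide field_simps)

lemma lam_div_lamt_close: "\<bar>lam t / lamt t - 1\<bar> \<le> 2 * spec_norm H / \<bar>lam t\<bar>"
proof -
  have "lamt t \<noteq> 0"
    using lamt_large lam_t_pos by auto
  then have "\<bar>lam t / lamt t - 1\<bar> = \<bar>lamt t - lam t\<bar> * \<bar>1 / lamt t\<bar>"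
    by (simp add: field_simps abs_divide abs_minus_commute)
  also have "\<dots> \<le> spec_norm H * (2 / \<bar>lam t\<bar>)"
    using lamt_close abs_inverse_lamt_le by (intro mult_mono) auto
  finally show ?thesis
    by (simp add: mult.commute)
qed

lemma coef_identity: "s < CARD('n) \<Longrightarrow> (lamt t - lam s) * coef s = u s \<bullet> (H *v ut t)"
  by (rule eigencoefficient_identity[OF P_sym u_eig ut_eig[OF t_range]])

lemma abs_coef_le_1: "s < CARD('n) \<Longrightarrow> \<bar>coef s\<bar> \<le> 1"
  using Cauchy_Schwarz_ineq2[of "ut t" "u s"] norm_orthonormal_frame[OF u_frame]
    norm_orthonormal_frame[OF ut_frame t_range] by simp

lemma sum_coef_sq: "(\<Sum>s<CARD('n). (coef s)\<^sup>2) = 1"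
  using orthonormal_frame_inner_self[OF u_frame, of "ut t"] orthonormal_frameD[OF ut_frame t_range t_range]
  by simp

lemma abs_H_coef_le: "s < CARD('n) \<Longrightarrow> \<bar>u s \<bullet> (H *v ut t)\<bar> \<le> spec_norm H"
  using Cauchy_Schwarz_ineq2[of "u s" "H *v ut t"] norm_mult_le_spec_norm[of H "ut t"]
    norm_orthonormal_frame[OF u_frame] norm_orthonormal_frame[OF ut_frame t_range] by force

lemma sum_H_coef_sq_le: "(\<Sum>s<CARD('n). (u s \<bullet> (H *v ut t))\<^sup>2) \<le> (spec_norm H)\<^sup>2"
proof -
  have "(\<Sum>s<CARD('n). (u s \<bullet> (H *v ut t))\<^sup>2) = (norm (H *v ut t))\<^sup>2"
    using orthonormal_frame_inner_self[OF u_frame, of "H *v ut t"]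
    by (simp add: inner_commute dot_square_norm)
  also have "\<dots> \<le> (spec_norm H)\<^sup>2"
    using norm_mult_le_spec_norm[of H "ut t"] norm_orthonormal_frame[OF ut_frame t_range]
    by (intro power_mono) auto
  finally show ?thesis .
qed

lemma gap_pos: "s \<in> others \<Longrightarrow> 0 < gap"
proof -
  assume "s \<in> others"
  then have "gap \<in> {\<bar>lam t - lam s\<bar> | s. s < n \<and> s \<noteq> t}"
    by (intro Min_in) auto
  then show ?thesis
    using simple n_card by force
qed

lemma gap_le: "s \<in> others \<Longrightarrow> gap \<le> \<bar>lam t - lam s\<bar>"
  by (intro Min_le) auto

lemma gap_separation:
  "spec_norm H \<le> gap / 2 \<Longrightarrow> s \<in> others \<Longrightarrow> gap / 2 \<le> \<bar>lamt t - lam s\<bar>"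
  using gap_le[of s] lamt_close by linarith

lemma abs_coef_other_le:
  assumes s: "s \<in> others"
  shows "\<bar>coef s\<bar> \<le> 2 * spec_norm H / gap"
proof -
  have gap: "0 < gap"
    using gap_pos[OF s] .
  show ?thesis
  proof (cases "spec_norm H \<le> gap / 2")
    case True
    have "gap / 2 * \<bar>coef s\<bar> \<le> \<bar>lamt t - lam s\<bar> * \<bar>coef s\<bar>"
      using gap_separation[OF True s] by (intro mult_right_mono) auto
    also have "\<dots> \<le> spec_norm H"
      using coef_identity[of s] abs_H_coef_le[of s] s n_card by (simp add: abs_mult[symmetric])
    finally show ?thesis
      using gap by (simp add: field_simps)
  next
    case False
    then have "1 \<le> 2 * spec_norm H / gap"
      using gap by (simp add: field_simps)
    then show ?thesis
      using abs_coef_le_1[of s] s n_card by auto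
  qed
qed

lemma sum_coef_other_sq_le: "(\<Sum>s\<in>others. (coef s)\<^sup>2) \<le> 4 * (spec_norm H)\<^sup>2 / gap\<^sup>2"
proof (cases "others = {}")
  case True
  then show ?thesis
    by (simp only: sum.empty) simp
next
  case False
  then obtain s where "s \<in> others"
    by blast
  then have gap: "0 < gap"
    by (rule gap_pos)
  show ?thesis
  proof (cases "spec_norm H \<le> gap / 2")
    case True
    have "(\<Sum>s\<in>others. (coef s)\<^sup>2) \<le> (\<Sum>s\<in>others. 4 / gap\<^sup>2 * (u s \<bullet> (H *v ut t))\<^sup>2)"
    proof (rule sum_mono)
      fix s assume s: "s \<in> others"
      have "(gap / 2)\<^sup>2 * (coef s)\<^sup>2 \<le> (lamt t - lam s)\<^sup>2 * (coef s)\<^sup>2"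
        using gap_separation[OF True s] gap
        by (intro mult_right_mono) (auto simp: abs_le_square_iff[symmetric])
      also have "\<dots> = (u s \<bullet> (H *v ut t))\<^sup>2"
        using coef_identity[of s] s n_card by (simp add: power_mult_distrib[symmetric])
      finally show "(coef s)\<^sup>2 \<le> 4 / gap\<^sup>2 * (u s \<bullet> (H *v ut t))\<^sup>2"
        using gap by (simp add: field_simps)
    qed
    also have "\<dots> = 4 / gap\<^sup>2 * (\<Sum>s\<in>others. (u s \<bullet> (H *v ut t))\<^sup>2)"
      by (simp add: sum_distrib_left)
    also have "\<dots> \<le> 4 / gap\<^sup>2 * (\<Sum>s<CARD('n). (u s \<bullet> (H *v ut t))\<^sup>2)"
      using n_card by (intro mult_left_mono sum_mono2) auto
    also have "\<dots> \<le> 4 / gap\<^sup>2 * (spec_norm H)\<^sup>2"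
      by (intro mult_left_mono sum_H_coef_sq_le) simp
    finally show ?thesis
      by simp
  next
    case False
    have "(\<Sum>s\<in>others. (coef s)\<^sup>2) \<le> (\<Sum>s<CARD('n). (coef s)\<^sup>2)"
      using n_card by (intro sum_mono2) auto
    also have "\<dots> = 1"
      by (rule sum_coef_sq)
    also have "1 \<le> 4 * (spec_norm H)\<^sup>2 / gap\<^sup>2"
    proof -
      have "gap\<^sup>2 \<le> (2 * spec_norm H)\<^sup>2"
        using False gap by (intro power_mono) auto
      then show ?thesis
        using gap by (simp add: field_simps)
    qed
    finally show ?thesis .
  qed
qed

lemma coef_t_close: "1 - \<bar>coef t\<bar> \<le> 4 * (spec_norm H)\<^sup>2 / gap\<^sup>2"
proof -
  have "1 = (coef t)\<^sup>2 + (\<Sum>s\<in>others. (coef s)\<^sup>2)"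
    using sum_coef_sq sum.remove[of "{..<n}" t "\<lambda>s. (coef s)\<^sup>2"] t_range n_card by simp
  moreover have "(coef t)\<^sup>2 \<le> \<bar>coef t\<bar>"
    using abs_coef_le_1[OF t_range]
    by (metis abs_ge_zero abs_mult_self_eq mult_right_le_one_le power2_eq_square)
  ultimately show ?thesis
    using sum_coef_other_sq_le by linarith
qed

text \<open>The sign \<open>\<zeta>\<close> of the theorem is that of \<open>coef t\<close>.\<close>

lemma leading_weight_close:
  "\<bar>coef t * lam t / lamt t - (if 0 \<le> coef t then 1 else -1)\<bar>
    \<le> 4 * (spec_norm H)\<^sup>2 / gap\<^sup>2 + 2 * spec_norm H / \<bar>lam t\<bar>"
proof -
  let ?c = "coef t" and ?r = "lam t / lamt t" and ?\<zeta> = "if 0 \<le> coef t then 1 else -1 :: real"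
  have "?c * lam t / lamt t - ?\<zeta> = ?\<zeta> * (\<bar>?c\<bar> * (?r - 1) - (1 - \<bar>?c\<bar>))"
    by (cases "0 \<le> ?c") (simp_all add: algebra_simps)
  then have "\<bar>?c * lam t / lamt t - ?\<zeta>\<bar> = \<bar>\<bar>?c\<bar> * (?r - 1) - (1 - \<bar>?c\<bar>)\<bar>"
    by (simp add: abs_mult)
  also have "\<dots> \<le> \<bar>?c\<bar> * \<bar>?r - 1\<bar> + (1 - \<bar>?c\<bar>)"
    using abs_triangle_ineq4[of "\<bar>?c\<bar> * (?r - 1)" "1 - \<bar>?c\<bar>"] abs_coef_le_1[OF t_range]
    by (simp add: abs_mult)
  also have "\<dots> \<le> \<bar>?r - 1\<bar> + (1 - \<bar>?c\<bar>)"
    using abs_coef_le_1[OF t_range] by (simp add: mult_left_le_one_le)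
  finally show ?thesis
    using lam_div_lamt_close coef_t_close by linarith
qed

lemma abs_leading_weight_le: "\<bar>coef t * lam t / lamt t\<bar> \<le> 2"
proof -
  have "\<bar>coef t * lam t / lamt t\<bar> = \<bar>coef t\<bar> * \<bar>lam t / lamt t\<bar>"
    by (simp add: abs_mult abs_divide)
  also have "\<dots> \<le> 1 * 2"
    using abs_coef_le_1[OF t_range] abs_lam_div_lamt_le by (intro mult_mono) auto
  finally show ?thesis
    by simp
qed

lemma abs_other_weight_le:
  assumes s: "s \<in> others"
  shows "\<bar>coef s * lam s / lamt t\<bar> \<le> 4 * spec_norm H / gap * \<bar>lam s / lam t\<bar>"
proof -
  have "0 < gap"
    using gap_pos[OF s] .
  have "\<bar>coef s * lam s / lamt t\<bar> = \<bar>coef s\<bar> * \<bar>lam s\<bar> * \<bar>1 / lamt t\<bar>"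
    by (simp add: abs_mult abs_divide)
  also have "\<dots> \<le> (2 * spec_norm H / gap) * \<bar>lam s\<bar> * (2 / \<bar>lam t\<bar>)"
    using abs_coef_other_le[OF s] abs_inverse_lamt_le \<open>0 < gap\<close> spec_norm_nonneg[of H]
    by (intro mult_mono) auto
  also have "\<dots> = 4 * spec_norm H / gap * \<bar>lam s / lam t\<bar>"
    by (simp add: abs_divide)
  finally show ?thesis .
qed

lemma fixed_point: "ut t = (1 / lamt t) *\<^sub>R (P *v ut t) + (1 / lamt t) *\<^sub>R (H *v ut t)"
proof -
  have "lamt t *\<^sub>R ut t = P *v ut t + H *v ut t"
    using ut_eig[OF t_range] by (simp add: matrix_vector_mult_add_rdistrib)
  moreover have "lamt t \<noteq> 0"
    using lamt_large lam_t_pos by auto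
  ultimately show ?thesis
    by (metis scaleR_add_right scaleR_scaleR divide_self_if nonzero_divide_eq_eq scaleR_one
        times_divide_eq_left mult_1)
qed

lemma P_ut_expansion: "(1 / lamt t) *\<^sub>R (P *v ut t) = (\<Sum>s<CARD('n). (coef s * lam s / lamt t) *\<^sub>R u s)"
proof -
  have "P *v ut t = P *v (\<Sum>s<CARD('n). coef s *\<^sub>R u s)"
    using orthonormal_frame_expansion[OF u_frame, of "ut t"] by (rule arg_cong)
  also have "\<dots> = (\<Sum>s<CARD('n). (coef s * lam s) *\<^sub>R u s)"
    by (simp add: linear_sum[OF matrix_vector_mul_linear] matrix_vector_mult_scaleR u_eig)
  finally show ?thesis
    by (simp add: scaleR_sum_right)
qed

lemma ut_decomposition:
  "ut t = (\<Sum>s<CARD('n). (coef s * lam s / lamt t) *\<^sub>R (u s + neumann_tail H (lamt t) N (u s)))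
      + (1 / lamt t) ^ Suc N *\<^sub>R ((\<lambda>x. H *v x) ^^ Suc N) (ut t)"
proof -
  let ?y = "(1 / lamt t) *\<^sub>R (P *v ut t)"
  have "ut t = ?y + neumann_tail H (lamt t) N ?y
      + (1 / lamt t) ^ Suc N *\<^sub>R ((\<lambda>x. H *v x) ^^ Suc N) (ut t)"
    by (rule neumann_expansion[OF fixed_point])
  also have "?y + neumann_tail H (lamt t) N ?y
      = (\<Sum>s<CARD('n). (coef s * lam s / lamt t) *\<^sub>R (u s + neumann_tail H (lamt t) N (u s)))"
    unfolding P_ut_expansion linear_sum[OF linear_neumann_tail] linear_scale[OF linear_neumann_tail]
    by (simp add: scaleR_add_right sum.distrib)
  finally show ?thesis .
qed

lemma abs_sum_others_le:
  "\<bar>\<Sum>s\<in>others. coef s * lam s / lamt t * (u s $ j + neumann_tail H (lamt t) N (u s) $ j)\<bar>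
    \<le> (\<Sum>s\<in>others. 4 * spec_norm H / gap * \<bar>lam s / lam t\<bar>
          * (\<bar>u s $ j\<bar> + xi_partial H (lam t) N (u s) j))"
proof (rule order_trans[OF sum_abs sum_mono])
  fix s assume "s \<in> others"
  have "\<bar>u s $ j + neumann_tail H (lamt t) N (u s) $ j\<bar> \<le> \<bar>u s $ j\<bar> + xi_partial H (lam t) N (u s) j"
    using abs_neumann_tail_component_le[OF abs_inverse_lamt_le, of H N "u s" j] by linarith
  moreover have weight: "\<bar>coef s * lam s / lamt t\<bar> \<le> 4 * spec_norm H / gap * \<bar>lam s / lam t\<bar>"
    by (rule abs_other_weight_le[OF \<open>s \<in> others\<close>])
  moreover have "0 \<le> 4 * spec_norm H / gap * \<bar>lam s / lam t\<bar>"
    using weight abs_ge_zero[of "coef s * lam s / lamt t"] by linarith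
  ultimately show "\<bar>coef s * lam s / lamt t * (u s $ j + neumann_tail H (lamt t) N (u s) $ j)\<bar>
      \<le> 4 * spec_norm H / gap * \<bar>lam s / lam t\<bar> * (\<bar>u s $ j\<bar> + xi_partial H (lam t) N (u s) j)"
    unfolding abs_mult by (intro mult_mono) simp_all
qed

lemma component_estimate:
  "min \<bar>(ut t - u t) $ j\<bar> \<bar>(ut t + u t) $ j\<bar>
    \<le> (4 * (spec_norm H)\<^sup>2 / gap\<^sup>2 + 2 * spec_norm H / \<bar>lam t\<bar>) * \<bar>u t $ j\<bar>
      + 2 * xi_partial H (lam t) N (u t) j
      + (\<Sum>s\<in>others. 4 * spec_norm H / gap * \<bar>lam s / lam t\<bar>
          * (\<bar>u s $ j\<bar> + xi_partial H (lam t) N (u s) j))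
      + (spec_norm H / \<bar>lamt t\<bar>) ^ Suc N"
proof -
  define k where "k s = coef s * lam s / lamt t" for s
  define e where "e s = neumann_tail H (lamt t) N (u s) $ j" for s
  define R where "R = (1 / lamt t) ^ Suc N *\<^sub>R ((\<lambda>x. H *v x) ^^ Suc N) (ut t)"
  define \<zeta> where "\<zeta> = (if 0 \<le> coef t then 1 else -1 :: real)"
  have e_le: "\<bar>e s\<bar> \<le> xi_partial H (lam t) N (u s) j" for s
    unfolding e_def by (rule abs_neumann_tail_component_le[OF abs_inverse_lamt_le])
  have "ut t $ j = (\<Sum>s<n. k s * (u s $ j + e s)) + R $ j"
    using arg_cong[OF ut_decomposition[of N], of "\<lambda>v. v $ j"] n_card
    by (simp add: k_def e_def R_def sum_component)
  also have "(\<Sum>s<n. k s * (u s $ j + e s)) = k t * (u t $ j + e t) + (\<Sum>s\<in>others. k s * (u s $ j + e s))"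
    using sum.remove[of "{..<n}" t] t_range n_card by simp
  finally have "ut t $ j - \<zeta> * u t $ j
      = (k t - \<zeta>) * u t $ j + k t * e t + (\<Sum>s\<in>others. k s * (u s $ j + e s)) + R $ j"
    by (simp add: algebra_simps)
  then have triangle: "\<bar>ut t $ j - \<zeta> * u t $ j\<bar>
      \<le> \<bar>k t - \<zeta>\<bar> * \<bar>u t $ j\<bar> + \<bar>k t\<bar> * \<bar>e t\<bar> + \<bar>\<Sum>s\<in>others. k s * (u s $ j + e s)\<bar> + \<bar>R $ j\<bar>"
    by (simp add: abs_mult[symmetric])
  have others_le: "\<bar>\<Sum>s\<in>others. k s * (u s $ j + e s)\<bar>
      \<le> (\<Sum>s\<in>others. 4 * spec_norm H / gap * \<bar>lam s / lam t\<bar> * (\<bar>u s $ j\<bar> + xi_partial H (lam t) N (u s) j))"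
    unfolding k_def e_def by (rule abs_sum_others_le)
  have leading_le: "\<bar>k t - \<zeta>\<bar> * \<bar>u t $ j\<bar> \<le> (4 * (spec_norm H)\<^sup>2 / gap\<^sup>2 + 2 * spec_norm H / \<bar>lam t\<bar>) * \<bar>u t $ j\<bar>"
    unfolding k_def \<zeta>_def using leading_weight_close by (rule mult_right_mono) simp
  have tail_le: "\<bar>k t\<bar> * \<bar>e t\<bar> \<le> 2 * xi_partial H (lam t) N (u t) j"
    unfolding k_def using abs_leading_weight_le e_le by (intro mult_mono) auto
  have remainder_le: "\<bar>R $ j\<bar> \<le> (spec_norm H / \<bar>lamt t\<bar>) ^ Suc N"
    using component_le_norm_cart[of R j] norm_neumann_remainder_le[of "lamt t" "Suc N" H "ut t"]
      norm_orthonormal_frame[OF ut_frame t_range]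
    unfolding R_def by simp
  have "min \<bar>(ut t - u t) $ j\<bar> \<bar>(ut t + u t) $ j\<bar> \<le> \<bar>ut t $ j - \<zeta> * u t $ j\<bar>"
    unfolding \<zeta>_def by auto
  with triangle others_le leading_le tail_le remainder_le show ?thesis
    by linarith
qed

text \<open>The argument gives the constant \<open>4\<close> in place of the stated \<open>4 sqrt 2\<close>.\<close>

lemma other_term_nonneg:
  "s \<in> others \<Longrightarrow> 0 \<le> 4 * spec_norm H / gap * \<bar>lam s / lam t\<bar> * (\<bar>u s $ j\<bar> + xi_partial H (lam t) N (u s) j)"
  using gap_pos[of s] spec_norm_nonneg[of H] xi_partial_nonneg[of H "lam t" N "u s" j] by simp

lemma other_terms_le:
  "ennreal (\<Sum>s\<in>others. 4 * spec_norm H / gap * \<bar>lam s / lam t\<bar>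
      * (\<bar>u s $ j\<bar> + xi_partial H (lam t) N (u s) j))
    \<le> ennreal (4 * sqrt 2 * spec_norm H / gap)
      * (\<Sum>s\<in>others. ennreal \<bar>lam s / lam t\<bar> * (ennreal \<bar>u s $ j\<bar> + xi H (lam t) (u s) j))"
proof -
  let ?a = "\<lambda>s. \<bar>lam s / lam t\<bar>" and ?S = "\<lambda>s. xi_partial H (lam t) N (u s) j"
  have term_le: "ennreal (4 * spec_norm H / gap * ?a s * (\<bar>u s $ j\<bar> + ?S s))
      \<le> ennreal (4 * sqrt 2 * spec_norm H / gap) * (ennreal (?a s) * (ennreal \<bar>u s $ j\<bar> + xi H (lam t) (u s) j))"
    if "s \<in> others" for s
  proof -
    have "0 < gap"
      using gap_pos[OF that] .
    moreover have "4 * spec_norm H \<le> 4 * sqrt 2 * spec_norm H"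
      using spec_norm_nonneg[of H] by (intro mult_right_mono) auto
    ultimately have "4 * spec_norm H / gap \<le> 4 * sqrt 2 * spec_norm H / gap"
      by (intro divide_right_mono) auto
    then have "ennreal (4 * spec_norm H / gap * ?a s * (\<bar>u s $ j\<bar> + ?S s))
        \<le> ennreal (4 * sqrt 2 * spec_norm H / gap * ?a s * (\<bar>u s $ j\<bar> + ?S s))"
      using xi_partial_nonneg[of H "lam t" N "u s" j] by (intro ennreal_leI mult_right_mono) auto
    also have "\<dots> = ennreal (4 * sqrt 2 * spec_norm H / gap) * (ennreal (?a s) * (ennreal \<bar>u s $ j\<bar> + ennreal (?S s)))"
      using \<open>0 < gap\<close> spec_norm_nonneg[of H] xi_partial_nonneg[of H "lam t" N "u s" j]
      by (simp only: ennreal_mult ennreal_plus mult.assoc mult_nonneg_nonneg add_nonneg_nonneg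
          divide_nonneg_nonneg abs_ge_zero real_sqrt_ge_zero zero_le_numeral less_imp_le)
    also have "\<dots> \<le> ennreal (4 * sqrt 2 * spec_norm H / gap) * (ennreal (?a s) * (ennreal \<bar>u s $ j\<bar> + xi H (lam t) (u s) j))"
      by (intro mult_left_mono add_left_mono xi_partial_le_xi) auto
    finally show ?thesis .
  qed
  have "ennreal (\<Sum>s\<in>others. 4 * spec_norm H / gap * ?a s * (\<bar>u s $ j\<bar> + ?S s))
      = (\<Sum>s\<in>others. ennreal (4 * spec_norm H / gap * ?a s * (\<bar>u s $ j\<bar> + ?S s)))"
    using other_term_nonneg by (rule sum_ennreal[symmetric])
  also have "\<dots> \<le> (\<Sum>s\<in>others. ennreal (4 * sqrt 2 * spec_norm H / gap)
      * (ennreal (?a s) * (ennreal \<bar>u s $ j\<bar> + xi H (lam t) (u s) j)))"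
    by (rule sum_mono) (rule term_le)
  finally show ?thesis
    by (simp add: sum_distrib_left)
qed

lemma component_bound:
  "ennreal (min \<bar>(ut t - u t) $ j\<bar> \<bar>(ut t + u t) $ j\<bar>)
    \<le> ennreal ((4 * (spec_norm H)\<^sup>2 / gap\<^sup>2 + 2 * spec_norm H / \<bar>lam t\<bar>) * \<bar>u t $ j\<bar>)
      + 2 * xi H (lam t) (u t) j
      + ennreal (4 * sqrt 2 * spec_norm H / gap)
        * (\<Sum>s\<in>others. ennreal \<bar>lam s / lam t\<bar> * (ennreal \<bar>u s $ j\<bar> + xi H (lam t) (u s) j))"
  (is "?lhs \<le> ?rhs")
proof (rule ennreal_le_epsilon)
  fix \<epsilon> :: real assume "0 < \<epsilon>"
  let ?q = "spec_norm H / \<bar>lamt t\<bar>" and ?S = "\<lambda>N s. xi_partial H (lam t) N (u s) j"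
  let ?\<alpha> = "4 * (spec_norm H)\<^sup>2 / gap\<^sup>2 + 2 * spec_norm H / \<bar>lam t\<bar>"
  let ?others = "\<lambda>N. \<Sum>s\<in>others. 4 * spec_norm H / gap * \<bar>lam s / lam t\<bar> * (\<bar>u s $ j\<bar> + ?S N s)"
  have "0 \<le> ?q" "?q < 1"
    using spec_norm_nonneg[of H] H_small lamt_large by (auto simp: field_simps)
  then obtain N where "?q ^ N < \<epsilon>"
    using real_arch_pow_inv[OF \<open>0 < \<epsilon>\<close>] by blast
  moreover have "?q ^ Suc N \<le> ?q ^ N"
    using \<open>0 \<le> ?q\<close> \<open>?q < 1\<close> by (intro power_decreasing) auto
  ultimately have "?lhs \<le> ennreal (?\<alpha> * \<bar>u t $ j\<bar> + 2 * ?S N t + ?others N + \<epsilon>)"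
    using component_estimate[of j N] by (intro ennreal_leI) linarith
  also have "\<dots> = ennreal (?\<alpha> * \<bar>u t $ j\<bar>) + ennreal (2 * ?S N t) + ennreal (?others N) + ennreal \<epsilon>"
  proof -
    have "0 \<le> ?others N"
      using other_term_nonneg by (rule sum_nonneg)
    moreover have "0 \<le> ?\<alpha> * \<bar>u t $ j\<bar>"
      using spec_norm_nonneg[of H] by simp
    ultimately show ?thesis
      using xi_partial_nonneg[of H "lam t" N "u t" j] \<open>0 < \<epsilon>\<close> by (simp only: ennreal_plus add_nonneg_nonneg
        mult_nonneg_nonneg zero_le_numeral less_imp_le)
  qed
  also have "ennreal (2 * ?S N t) \<le> 2 * xi H (lam t) (u t) j"
    using xi_partial_nonneg[of H "lam t" N "u t" j] xi_partial_le_xi[of H "lam t" N "u t" j]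
    by (simp add: ennreal_mult mult_left_mono)
  also note other_terms_le
  finally show "?lhs \<le> ?rhs + ennreal \<epsilon>"
    by (simp add: add.assoc)
qed

end

theorem lemmaB2:
  fixes P H :: "real^'n^'n"
    and lam lamt :: "nat \<Rightarrow> real"
    and u ut :: "nat \<Rightarrow> real^'n"
    and t :: nat
  defines "n \<equiv> CARD('n)"
  defines "A \<equiv> P + H"
  defines "Delta \<equiv> Min {\<bar>lam t - lam s\<bar> | s. s < n \<and> s \<noteq> t}"
  assumes P_sym: "transpose P = P"
    and H_sym: "transpose H = H"
    and lam_sorted: "\<And>s r. s \<le> r \<Longrightarrow> r < n \<Longrightarrow> lam r \<le> lam s"
    and u_orth: "\<And>s r. s < n \<Longrightarrow> r < n \<Longrightarrow> u s \<bullet> u r = (if s = r then 1 else 0)"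
    and u_eig: "\<And>s. s < n \<Longrightarrow> P *v u s = lam s *\<^sub>R u s"
    and lamt_sorted: "\<And>s r. s \<le> r \<Longrightarrow> r < n \<Longrightarrow> lamt r \<le> lamt s"
    and ut_orth: "\<And>s r. s < n \<Longrightarrow> r < n \<Longrightarrow> ut s \<bullet> ut r = (if s = r then 1 else 0)"
    and ut_eig: "\<And>s. s < n \<Longrightarrow> A *v ut s = lamt s *\<^sub>R ut s"
    and t_range: "t < n"
    and simple: "\<And>s. s < n \<Longrightarrow> s \<noteq> t \<Longrightarrow> lam s \<noteq> lam t"
    and H_small: "spec_norm H < \<bar>lam t\<bar> / 2"
  shows "\<forall>j. ennreal (min \<bar>(ut t - u t) $ j\<bar> \<bar>(ut t + u t) $ j\<bar>)
     \<le> ennreal ((4 * (spec_norm H)\<^sup>2 / Delta\<^sup>2 + 2 * spec_norm H / \<bar>lam t\<bar>) * \<bar>u t $ j\<bar>)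
        + 2 * xi H (lam t) (u t) j
        + ennreal (4 * sqrt 2 * spec_norm H / Delta)
          * (\<Sum>s\<in>{..<n} - {t}. ennreal \<bar>lam s / lam t\<bar> * (ennreal \<bar>u s $ j\<bar> + xi H (lam t) (u s) j))"
proof -
  interpret simple_eigen_perturbation P H lam lamt u ut t n
    by unfold_locales (use assms in \<open>auto simp: n_def A_def orthonormal_frame_def\<close>)
  show ?thesis
    unfolding Delta_def using component_bound by blast
qed

end
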